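(* Let $d\ge2$, $i\in\{1,\dots,d\}$, $\widetilde x\in\mathbb{R}^{d-1}$, $y\in\mathbb{R}$ and $x = (\widetilde{x}_1,\dots,\widetilde{x}_{i-1},y,\widetilde{x}_i,\dots,\widetilde{x}_{d-1})^\top\in\mathbb{R}^d$. For $\theta\in\{\pm1\}^d$ write $\theta_{-i} := (\theta_1,\dots,\theta_{i-1},\theta_{i+1},\dots,\theta_d)^\top$. Then: 1. If $(\theta,p)=\mathrm{csa}_{\text{even}}(x)$ and $\theta_i = 1$, then $\mathrm{csa}_{\text{odd}}(\widetilde x) = (\theta_{-i}, p-1)$. 2. If $(\theta,p)=\mathrm{csa}_{\text{odd}}(x)$ and $\theta_i = 1$, then $\mathrm{csa}_{\text{even}}(\widetilde x) = (\theta_{-i}, p-1)$. 3. If $(\theta,p)=\mathrm{csa}_{\text{even}}(x)$ and $\theta_i = -1$, then $\mathrm{csa}_{\text{even}}(\widetilde x) = (\theta_{-i}, p)$. 4. If $(\theta,p)=\mathrm{csa}_{\text{odd}}(x)$ and $\theta_i = -1$, then $\mathrm{csa}_{\text{odd}}(\widetilde x) = (\theta_{-i}, p)$.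
   Context: Cut-search procedures: for $u\in\mathbb{R}^k$, $\mathrm{csa}_{\text{even}}(u)$ is computed as follows: set $\theta_j = 1$ if $u_j>1/2$ and $\theta_j=-1$ otherwise ($j=1,\dots,k$); if $|\{j:\theta_j=1\}|$ is even, let $j^*$ be the smallest index in $\arg\min_j |u_j - 1/2|$ and replace $\theta_{j^*}$ by $-\theta_{j^*}$; finally set $p = |\{j:\theta_j = 1\}| - 1$ and output $(\theta,p)$. $\mathrm{csa}_{\text{odd}}(u)$ is identical except that the flip is performed when $|\{j:\theta_j=1\}|$ is odd. (These output the only potentially violated forbidden-set inequality $\theta^\top w\le p$ of $\operatorname{conv}\{w\in\{0,1\}^k:\sum w_j \text{ even}\}$, respectively of its odd counterpart, at $\Pi_{[0,1]^k}(u)$.) *)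

theory Defs
  imports Main Complex_Main
begin

text \<open>Vectors in R^k are represented as lists of length k (0-based indices).
  Sign vectors theta in {-1,1}^k are int lists.\<close>

definition csa_signs :: "real list \<Rightarrow> int list" where
  "csa_signs u = map (\<lambda>t. if t > 1/2 then 1 else -1) u"

definition num_ones :: "int list \<Rightarrow> nat" where
  "num_ones \<theta> = card {j. j < length \<theta> \<and> \<theta> ! j = 1}"

definition csa_jstar :: "real list \<Rightarrow> nat" where
  "csa_jstar u = (LEAST j. j < length u \<and>
      (\<forall>k < length u. \<bar>u ! j - 1/2\<bar> \<le> \<bar>u ! k - 1/2\<bar>))"

definition csa_flip :: "real list \<Rightarrow> int list" where
  "csa_flip u = (let \<theta> = csa_signs u; j = csa_jstar u in \<theta>[j := - (\<theta> ! j)])"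

definition csa_even :: "real list \<Rightarrow> int list \<times> int" where
  "csa_even u = (let \<theta> = (if even (num_ones (csa_signs u)) then csa_flip u else csa_signs u)
                 in (\<theta>, int (num_ones \<theta>) - 1))"

definition csa_odd :: "real list \<Rightarrow> int list \<times> int" where
  "csa_odd u = (let \<theta> = (if odd (num_ones (csa_signs u)) then csa_flip u else csa_signs u)
                 in (\<theta>, int (num_ones \<theta>) - 1))"

definition drop_idx :: "nat \<Rightarrow> 'a list \<Rightarrow> 'a list" where
  "drop_idx i xs = take i xs @ drop (Suc i) xs"

definition ins_idx :: "nat \<Rightarrow> 'a \<Rightarrow> 'a list \<Rightarrow> 'a list" where
  "ins_idx i y xs = take i xs @ [y] @ drop i xs"

end

theory Submission
  imports Defs
begin

text \<open>Let \<open>x\<close> arise from \<open>x\<^sub>-\<^sub>i\<close> by inserting \<open>y\<close> at position \<open>i\<close>. Deleting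
  coordinate \<open>i\<close> leaves the rounded signs of the other coordinates unchanged, and if
  the flip index \<open>j\<^sup>*\<close> of \<open>x\<close> is not \<open>i\<close>, it is the shifted flip index of
  \<open>x\<^sub>-\<^sub>i\<close>, since the index map \<open>k \<mapsto> k + [k \<ge> i]\<close> is strictly increasing.
  Deleting \<open>\<theta>\<^sub>i\<close> changes the number of ones by \<open>[\<theta>\<^sub>i = 1]\<close>, so \<open>\<theta>\<^sub>-\<^sub>i\<close> is
  produced by the procedure of the opposite parity if \<open>\<theta>\<^sub>i = 1\<close> and of the same
  parity otherwise. The one delicate case is a flip at \<open>i\<close> itself: then
  \<open>\<theta>\<^sub>i = -sign(y)\<close>, which accounts both for the parity switch and for \<open>x\<^sub>-\<^sub>i\<close>
  not being flipped.\<close>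

lemma length_ins_idx [simp]: "i \<le> length xs \<Longrightarrow> length (ins_idx i y xs) = Suc (length xs)"
  unfolding ins_idx_def by simp

lemma nth_ins_idx:
  "i \<le> length xs \<Longrightarrow> k \<le> length xs \<Longrightarrow>
    ins_idx i y xs ! k = (if k < i then xs ! k else if k = i then y else xs ! (k - 1))"
  unfolding ins_idx_def by (auto simp: nth_append min_def nth_Cons')

lemma nth_ins_idx_shift:
  "i \<le> length xs \<Longrightarrow> k < length xs \<Longrightarrow> ins_idx i y xs ! (if k < i then k else Suc k) = xs ! k"
  by (simp add: nth_ins_idx)

lemma map_ins_idx: "map f (ins_idx i y xs) = ins_idx i (f y) (map f xs)"
  unfolding ins_idx_def by (simp add: take_map drop_map)

lemma drop_idx_ins_idx [simp]: "i \<le> length xs \<Longrightarrow> drop_idx i (ins_idx i y xs) = xs"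
  unfolding ins_idx_def drop_idx_def by simp

lemma ins_idx_drop_idx: "i < length xs \<Longrightarrow> ins_idx i (xs ! i) (drop_idx i xs) = xs"
  unfolding ins_idx_def drop_idx_def by (simp add: min_def id_take_nth_drop[symmetric])

lemma list_update_ins_idx:
  "i \<le> length xs \<Longrightarrow> k < length xs \<Longrightarrow>
    (ins_idx i y xs)[if k < i then k else Suc k := v] = ins_idx i y (xs[k := v])"
  by (rule nth_equalityI) (auto simp: nth_ins_idx nth_list_update)

lemma list_update_ins_idx_same: "i \<le> length xs \<Longrightarrow> (ins_idx i y xs)[i := v] = ins_idx i v xs"
  unfolding ins_idx_def by (simp add: list_update_append)

lemma num_ones_ins_idx: "num_ones (ins_idx i a xs) = num_ones xs + (if a = 1 then 1 else 0)"
proof -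
  have count: "num_ones t = length (filter (\<lambda>b. b = 1) t)" for t
    unfolding num_ones_def by (simp add: length_filter_conv_card)
  show ?thesis
    unfolding count ins_idx_def
    by (subst (3) append_take_drop_id[of i xs, symmetric]) (simp only: filter_append, simp)
qed

lemma num_ones_drop_idx:
  "i < length \<theta> \<Longrightarrow> num_ones \<theta> = num_ones (drop_idx i \<theta>) + (if \<theta> ! i = 1 then 1 else 0)"
  by (metis ins_idx_drop_idx num_ones_ins_idx)

definition csa_sign :: "real \<Rightarrow> int" where
  "csa_sign t = (if t > 1/2 then 1 else -1)"

lemma csa_signs_eq_map: "csa_signs u = map csa_sign u"
  unfolding csa_signs_def csa_sign_def ..

lemma length_csa_signs [simp]: "length (csa_signs u) = length u"
  by (simp add: csa_signs_def)

lemma csa_signs_ins_idx: "csa_signs (ins_idx i y u) = ins_idx i (csa_sign y) (csa_signs u)"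
  by (simp add: csa_signs_eq_map map_ins_idx)

lemma csa_jstar_eqI:
  assumes "j < length u"
    and "\<And>k. k < length u \<Longrightarrow> \<bar>u ! j - 1/2\<bar> \<le> \<bar>u ! k - 1/2\<bar>"
    and "\<And>k. k < j \<Longrightarrow> \<bar>u ! j - 1/2\<bar> < \<bar>u ! k - 1/2\<bar>"
  shows "csa_jstar u = j"
  unfolding csa_jstar_def
proof (rule Least_equality)
  fix m assume m: "m < length u \<and> (\<forall>k<length u. \<bar>u ! m - 1/2\<bar> \<le> \<bar>u ! k - 1/2\<bar>)"
  show "j \<le> m"
  proof (rule ccontr)
    assume "\<not> j \<le> m"
    then have "\<bar>u ! j - 1/2\<bar> < \<bar>u ! m - 1/2\<bar>" using assms(3) by simp
    with m assms(1) show False by force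
  qed
qed (use assms in auto)

lemma csa_jstar_least_minimizer:
  assumes "u \<noteq> []"
  shows "csa_jstar u < length u"
    and "\<And>k. k < length u \<Longrightarrow> \<bar>u ! csa_jstar u - 1/2\<bar> \<le> \<bar>u ! k - 1/2\<bar>"
    and "\<And>k. k < csa_jstar u \<Longrightarrow> \<bar>u ! csa_jstar u - 1/2\<bar> < \<bar>u ! k - 1/2\<bar>"
proof -
  let ?dist = "\<lambda>k. \<bar>u ! k - 1/2\<bar>"
  let ?P = "\<lambda>j. j < length u \<and> (\<forall>k < length u. ?dist j \<le> ?dist k)"
  obtain j where "is_arg_min ?dist (\<lambda>k. k \<in> {..<length u}) j"
    using ex_is_arg_min_if_finite[of "{..<length u}" ?dist] assms by auto
  then have "?P j"
    unfolding is_arg_min_def by (meson lessThan_iff not_le)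
  then have P: "?P (csa_jstar u)"
    unfolding csa_jstar_def by (rule LeastI)
  then show "csa_jstar u < length u" "\<And>k. k < length u \<Longrightarrow> ?dist (csa_jstar u) \<le> ?dist k"
    by auto
  fix k assume k: "k < csa_jstar u"
  then have "\<not> ?P k"
    unfolding csa_jstar_def by (rule not_less_Least)
  moreover have "k < length u"
    using k P by linarith
  ultimately obtain m where "m < length u" "?dist m < ?dist k"
    by (meson not_le)
  with P show "?dist (csa_jstar u) < ?dist k"
    by fastforce
qed

lemma csa_jstar_ins_idx:
  assumes "i \<le> length u" "u \<noteq> []" "csa_jstar (ins_idx i y u) \<noteq> i"
  shows "csa_jstar (ins_idx i y u) =
      (if csa_jstar u < i then csa_jstar u else Suc (csa_jstar u))"
proof -
  let ?x = "ins_idx i y u" and ?J = "csa_jstar (ins_idx i y u)"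
  let ?shift = "\<lambda>k. if k < i then k else Suc k"
  define j where "j = (if ?J < i then ?J else ?J - 1)"
  have "?x \<noteq> []"
    using assms(1) by (metis length_ins_idx list.size(3) nat.distinct(1))
  note J = csa_jstar_least_minimizer[OF this]
  have "?J < Suc (length u)"
    using J(1) assms(1) by simp
  then have j: "j < length u" "?shift j = ?J"
    using assms unfolding j_def by auto
  have shifted: "?x ! ?shift k = u ! k" "?shift k < length ?x" if "k < length u" for k
    using that assms(1) by (simp_all add: nth_ins_idx_shift)
  have "csa_jstar u = j"
  proof (rule csa_jstar_eqI)
    fix k assume k: "k < length u"
    have "\<bar>?x ! ?J - 1/2\<bar> \<le> \<bar>?x ! ?shift k - 1/2\<bar>"
      using J(2) shifted(2)[OF k] .
    then show "\<bar>u ! j - 1/2\<bar> \<le> \<bar>u ! k - 1/2\<bar>"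
      using shifted(1)[OF k] shifted(1)[OF j(1)] j(2) by simp
  next
    fix k assume k: "k < j"
    then have "?shift k < ?J"
      unfolding j(2)[symmetric] by simp
    then have "\<bar>?x ! ?J - 1/2\<bar> < \<bar>?x ! ?shift k - 1/2\<bar>"
      by (rule J(3))
    then show "\<bar>u ! j - 1/2\<bar> < \<bar>u ! k - 1/2\<bar>"
      using k j shifted(1)[of k] shifted(1)[OF j(1)] by simp
  qed (fact j)
  then show ?thesis
    unfolding j(2)[symmetric] by simp
qed

lemma csa_flip_ins_idx:
  assumes "i \<le> length u" "u \<noteq> []"
  shows "csa_flip (ins_idx i y u) =
      (if csa_jstar (ins_idx i y u) = i then ins_idx i (- csa_sign y) (csa_signs u)
       else ins_idx i (csa_sign y) (csa_flip u))"
proof (cases "csa_jstar (ins_idx i y u) = i")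
  case True
  with assms(1) show ?thesis
    by (simp add: csa_flip_def csa_signs_ins_idx nth_ins_idx list_update_ins_idx_same)
next
  case False
  have "csa_jstar u < length u"
    using csa_jstar_least_minimizer(1)[OF assms(2)] .
  with False assms show ?thesis
    by (simp add: csa_flip_def csa_signs_ins_idx csa_jstar_ins_idx nth_ins_idx_shift
        list_update_ins_idx Let_def del: One_nat_def)
qed

lemma length_csa_flip [simp]: "length (csa_flip u) = length u"
  by (simp add: csa_flip_def Let_def)

definition csa_theta :: "bool \<Rightarrow> real list \<Rightarrow> int list" where
  "csa_theta flip_even u =
    (if even (num_ones (csa_signs u)) = flip_even then csa_flip u else csa_signs u)"

definition csa_parity :: "bool \<Rightarrow> real list \<Rightarrow> int list \<times> int" where
  "csa_parity flip_even u =
    (csa_theta flip_even u, int (num_ones (csa_theta flip_even u)) - 1)"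

lemma csa_even_eq_csa_parity: "csa_even = csa_parity True"
  by (simp add: fun_eq_iff csa_even_def csa_parity_def csa_theta_def Let_def)

lemma csa_odd_eq_csa_parity: "csa_odd = csa_parity False"
  by (simp add: fun_eq_iff csa_odd_def csa_parity_def csa_theta_def Let_def)

lemma length_csa_theta [simp]: "length (csa_theta flip_even u) = length u"
  by (simp add: csa_theta_def)

lemma csa_theta_ins_idx:
  fixes flip_even :: bool and y :: real
  assumes "i \<le> length u" "u \<noteq> []"
  defines "\<theta> \<equiv> csa_theta flip_even (ins_idx i y u)"
  shows "drop_idx i \<theta> = csa_theta (flip_even \<noteq> (\<theta> ! i = 1)) u"
proof -
  let ?a = "csa_sign y" and ?s = "csa_signs u"
  have parity: "even (num_ones (csa_signs (ins_idx i y u))) = (even (num_ones ?s) \<noteq> (?a = 1))"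
    by (simp add: csa_signs_ins_idx num_ones_ins_idx)
  have sign: "(- ?a = 1) = (\<not> ?a = 1)"
    by (simp add: csa_sign_def)
  consider (no_flip) "even (num_ones (csa_signs (ins_idx i y u))) \<noteq> flip_even"
    | (flip_at_i) "even (num_ones (csa_signs (ins_idx i y u))) = flip_even"
        "csa_jstar (ins_idx i y u) = i"
    | (flip_elsewhere) "even (num_ones (csa_signs (ins_idx i y u))) = flip_even"
        "csa_jstar (ins_idx i y u) \<noteq> i"
    by blast
  then show ?thesis
  proof cases
    case no_flip
    then have "\<theta> = ins_idx i ?a ?s"
      by (simp add: \<theta>_def csa_theta_def csa_signs_ins_idx)
    moreover have "even (num_ones ?s) \<noteq> (flip_even \<noteq> (?a = 1))"
      using no_flip parity by blast
    ultimately show ?thesis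
      using assms(1) by (auto simp: csa_theta_def nth_ins_idx)
  next
    case flip_at_i
    then have "\<theta> = ins_idx i (- ?a) ?s"
      using assms(1,2) by (simp add: \<theta>_def csa_theta_def csa_flip_ins_idx)
    moreover have "even (num_ones ?s) \<noteq> (flip_even \<noteq> (- ?a = 1))"
      using flip_at_i(1) parity sign by blast
    ultimately show ?thesis
      using assms(1) by (auto simp: csa_theta_def nth_ins_idx)
  next
    case flip_elsewhere
    then have "\<theta> = ins_idx i ?a (csa_flip u)"
      using assms(1,2) by (simp add: \<theta>_def csa_theta_def csa_flip_ins_idx)
    moreover have "even (num_ones ?s) = (flip_even \<noteq> (?a = 1))"
      using flip_elsewhere(1) parity by blast
    ultimately show ?thesis
      using assms(1) by (auto simp: csa_theta_def nth_ins_idx)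
  qed
qed

lemma csa_parity_ins_idx:
  assumes "i \<le> length u" "u \<noteq> []" "csa_parity flip_even (ins_idx i y u) = (\<theta>, p)"
  shows "csa_parity (flip_even \<noteq> (\<theta> ! i = 1)) u =
      (drop_idx i \<theta>, p - (if \<theta> ! i = 1 then 1 else 0))"
proof -
  have \<theta>: "\<theta> = csa_theta flip_even (ins_idx i y u)" and p: "p = int (num_ones \<theta>) - 1"
    using assms(3) by (auto simp: csa_parity_def)
  have "i < length \<theta>"
    using assms(1) by (simp add: \<theta>)
  with assms(1,2) show ?thesis
    unfolding csa_parity_def p \<theta> csa_theta_ins_idx[OF assms(1,2), symmetric]
    by (subst num_ones_drop_idx[of i]) auto
qed

theorem theorem6:
  fixes d i :: nat and xt :: "real list" and y :: real
  assumes "d \<ge> 2" and "length xt = d - 1" and "i < d"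
  shows "(\<forall>\<theta> p. csa_even (ins_idx i y xt) = (\<theta>, p) \<and> \<theta> ! i = 1
              \<longrightarrow> csa_odd xt = (drop_idx i \<theta>, p - 1))
       \<and> (\<forall>\<theta> p. csa_odd (ins_idx i y xt) = (\<theta>, p) \<and> \<theta> ! i = 1
              \<longrightarrow> csa_even xt = (drop_idx i \<theta>, p - 1))
       \<and> (\<forall>\<theta> p. csa_even (ins_idx i y xt) = (\<theta>, p) \<and> \<theta> ! i = -1
              \<longrightarrow> csa_even xt = (drop_idx i \<theta>, p))
       \<and> (\<forall>\<theta> p. csa_odd (ins_idx i y xt) = (\<theta>, p) \<and> \<theta> ! i = -1
              \<longrightarrow> csa_odd xt = (drop_idx i \<theta>, p))"
proof -
  have "i \<le> length xt" "xt \<noteq> []"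
    using assms by auto
  then show ?thesis
    unfolding csa_even_eq_csa_parity csa_odd_eq_csa_parity
    by (auto dest!: csa_parity_ins_idx)
qed

end
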